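(* For every quantifier-free insertion query $\rho$ over the graph schema $\{E\}$ there is a constant $m\in\mathbb N$ such that for every directed acyclic graph $G$ and every change $\delta=\rho(\bar a)$, either $\delta(G)$ has a (directed) cycle containing at most $m$ bridges, or for all nodes $u,v$ of $G$ such that there is a directed path from $u$ to $v$ in $\delta(G)$ it holds that $\mathrm{bd}(u,v)\le m$.
   Context: A quantifier-free insertion query $\rho(\bar p)$ for graphs is a rule $E := E(x,y)\lor\varphi(\bar p;x,y)$ with $\varphi$ a quantifier-free formula over $\{E\}$; the change $\delta=\rho(\bar a)$ maps a directed graph $G$ to the graph $\delta(G)$ with edge set $\{(b,c): G\models E(b,c)\lor\varphi(\bar a;b,c)\}$. A bridge is an edge of $\delta(G)$ that is not an edge of $G$. For nodes $u,v$ with a directed path from $u$ to $v$ in $\delta(G)$, the bridge distance $\mathrm{bd}(u,v)$ is the minimal number $d$ such that there is a directed path from $u$ to $v$ in $\delta(G)$ using exactly $d$ bridges. *)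

theory Defs
  imports Main
begin

datatype qterm = Par nat | VarX | VarY

datatype qf = QTrue | QFalse | QE qterm qterm | QEq qterm qterm
  | QNeg qf | QConj qf qf | QDisj qf qf

fun tparams :: "qterm \<Rightarrow> nat set" where
  "tparams (Par i) = {i}" | "tparams VarX = {}" | "tparams VarY = {}"

fun qparams :: "qf \<Rightarrow> nat set" where
  "qparams QTrue = {}" | "qparams QFalse = {}"
| "qparams (QE s t) = tparams s \<union> tparams t"
| "qparams (QEq s t) = tparams s \<union> tparams t"
| "qparams (QNeg f) = qparams f"
| "qparams (QConj f g) = qparams f \<union> qparams g"
| "qparams (QDisj f g) = qparams f \<union> qparams g"

fun tval :: "'a list \<Rightarrow> 'a \<Rightarrow> 'a \<Rightarrow> qterm \<Rightarrow> 'a" where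
  "tval as b c (Par i) = as ! i" | "tval as b c VarX = b" | "tval as b c VarY = c"

fun qsat :: "('a \<times> 'a) set \<Rightarrow> 'a list \<Rightarrow> 'a \<Rightarrow> 'a \<Rightarrow> qf \<Rightarrow> bool" where
  "qsat E as b c QTrue = True"
| "qsat E as b c QFalse = False"
| "qsat E as b c (QE s t) = ((tval as b c s, tval as b c t) \<in> E)"
| "qsat E as b c (QEq s t) = (tval as b c s = tval as b c t)"
| "qsat E as b c (QNeg f) = (\<not> qsat E as b c f)"
| "qsat E as b c (QConj f g) = (qsat E as b c f \<and> qsat E as b c g)"
| "qsat E as b c (QDisj f g) = (qsat E as b c f \<or> qsat E as b c g)"

text \<open>A graph is a node set V with edge relation E; the change
  delta = rho(as) with rho being E := E(x,y) \<or> phi(p;x,y) yields edge set:\<close>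
definition changed_edges :: "'a set \<Rightarrow> ('a \<times> 'a) set \<Rightarrow> qf \<Rightarrow> 'a list \<Rightarrow> ('a \<times> 'a) set" where
  "changed_edges V E \<phi> as = {(b, c). b \<in> V \<and> c \<in> V \<and> ((b, c) \<in> E \<or> qsat E as b c \<phi>)}"

definition is_bridge :: "'a set \<Rightarrow> ('a \<times> 'a) set \<Rightarrow> qf \<Rightarrow> 'a list \<Rightarrow> 'a \<times> 'a \<Rightarrow> bool" where
  "is_bridge V E \<phi> as e \<longleftrightarrow> e \<in> changed_edges V E \<phi> as \<and> e \<notin> E"

definition is_walk :: "('a \<times> 'a) set \<Rightarrow> 'a list \<Rightarrow> bool" where
  "is_walk F xs \<longleftrightarrow> xs \<noteq> [] \<and> (\<forall>e \<in> set (zip xs (tl xs)). e \<in> F)"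

definition num_bridges :: "'a set \<Rightarrow> ('a \<times> 'a) set \<Rightarrow> qf \<Rightarrow> 'a list \<Rightarrow> 'a list \<Rightarrow> nat" where
  "num_bridges V E \<phi> as xs = length (filter (is_bridge V E \<phi> as) (zip xs (tl xs)))"

definition path_from_to :: "('a \<times> 'a) set \<Rightarrow> 'a \<Rightarrow> 'a \<Rightarrow> 'a list \<Rightarrow> bool" where
  "path_from_to F u v xs \<longleftrightarrow> is_walk F xs \<and> hd xs = u \<and> last xs = v"

definition is_cycle :: "('a \<times> 'a) set \<Rightarrow> 'a list \<Rightarrow> bool" where
  "is_cycle F xs \<longleftrightarrow> is_walk F xs \<and> length xs \<ge> 2 \<and> hd xs = last xs"

definition bridge_dist :: "'a set \<Rightarrow> ('a \<times> 'a) set \<Rightarrow> qf \<Rightarrow> 'a list \<Rightarrow> 'a \<Rightarrow> 'a \<Rightarrow> nat" where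
  "bridge_dist V E \<phi> as u v = (LEAST d. \<exists>xs. path_from_to (changed_edges V E \<phi> as) u v xs
       \<and> num_bridges V E \<phi> as xs = d)"

definition is_dag :: "'a set \<Rightarrow> ('a \<times> 'a) set \<Rightarrow> bool" where
  "is_dag V E \<longleftrightarrow> finite V \<and> E \<subseteq> V \<times> V \<and> acyclic E"

end

theory Submission
  imports Defs
begin

text \<open>The type of a node x relative to the parameters a_1..a_k records, for each i, whether
  x = a_i, (a_i, x) \<in> E and (x, a_i) \<in> E; there are 8^k types. Whether a quantifier-free
  insertion query inserts (b, c) depends only on the types of b and c and on how b and c are
  related to each other. Hence if a walk uses a bridge leaving x and, later, a bridge (b, c)
  whose tail b has the type of x, then (x, c) is an edge of the changed graph too, unless one
  of the few relations distinguishing (x, c) from (b, c) holds; each of those relations closes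
  a cycle with at most 8^k + 1 bridges. Shortcutting repeatedly, every reachable node is reached
  by a walk whose bridge tails have pairwise distinct types, i.e. with at most 8^k bridges.\<close>

fun walk_edges :: "'a list \<Rightarrow> ('a \<times> 'a) list" where
  "walk_edges (x # y # zs) = (x, y) # walk_edges (y # zs)"
| "walk_edges _ = []"

lemma walk_edges_eq_zip: "walk_edges xs = zip xs (tl xs)"
  by (induction xs rule: walk_edges.induct) auto

lemma walk_edges_Cons: "ys \<noteq> [] \<Longrightarrow> walk_edges (x # ys) = (x, hd ys) # walk_edges ys"
  by (cases ys) auto

lemma walk_edges_append:
  "walk_edges (xs @ y # ys) = walk_edges (xs @ [y]) @ walk_edges (y # ys)"
  by (induction xs) (auto simp: walk_edges_Cons hd_append)

lemma walk_edges_decomp: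
  "(b, c) \<in> set (walk_edges ys) \<Longrightarrow> \<exists>p q. ys = p @ b # c # q"
proof (induction ys rule: walk_edges.induct)
  case (1 x y zs)
  show ?case
  proof (cases "(b, c) = (x, y)")
    case True
    then show ?thesis by auto
  next
    case False
    with "1.prems" obtain p q where "y # zs = p @ b # c # q" using "1.IH" by auto
    then show ?thesis by (metis append_Cons)
  qed
qed auto

lemma is_walk_iff_walk_edges: "is_walk F xs \<longleftrightarrow> xs \<noteq> [] \<and> set (walk_edges xs) \<subseteq> F"
  by (auto simp: is_walk_def walk_edges_eq_zip)

lemma num_bridges_eq_walk_edges:
  "num_bridges V E \<phi> as xs = length (filter (is_bridge V E \<phi> as) (walk_edges xs))"
  by (simp add: num_bridges_def walk_edges_eq_zip)

lemma bridge_dist_le_num_bridges: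
  "path_from_to (changed_edges V E \<phi> as) u v xs \<Longrightarrow>
     bridge_dist V E \<phi> as u v \<le> num_bridges V E \<phi> as xs"
  unfolding bridge_dist_def by (rule Least_le) blast

definition node_type :: "('a \<times> 'a) set \<Rightarrow> 'a list \<Rightarrow> 'a \<Rightarrow> (bool \<times> bool \<times> bool) list" where
  "node_type E as x = map (\<lambda>a. (x = a, (a, x) \<in> E, (x, a) \<in> E)) as"

lemma node_type_nth_cong:
  assumes "node_type E as b = node_type E as b'" "i < length as"
  shows "(b = as ! i) = (b' = as ! i)" "((as ! i, b) \<in> E) = ((as ! i, b') \<in> E)"
    "((b, as ! i) \<in> E) = ((b', as ! i) \<in> E)"
proof -
  have "node_type E as b ! i = node_type E as b' ! i" using assms(1) by simp
  then show "(b = as ! i) = (b' = as ! i)" "((as ! i, b) \<in> E) = ((as ! i, b') \<in> E)"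
    "((b, as ! i) \<in> E) = ((b', as ! i) \<in> E)"
    using assms(2) by (auto simp: node_type_def)
qed

lemma qsat_node_type_cong:
  assumes "qparams \<phi> \<subseteq> {..<length as}"
    and "node_type E as b = node_type E as b'" "node_type E as c = node_type E as c'"
    and "(b = c) = (b' = c')" "((b, c) \<in> E) = ((b', c') \<in> E)" "((c, b) \<in> E) = ((c', b') \<in> E)"
    and "((b, b) \<in> E) = ((b', b') \<in> E)" "((c, c) \<in> E) = ((c', c') \<in> E)"
  shows "qsat E as b c \<phi> = qsat E as b' c' \<phi>"
  using assms(1)
proof (induction \<phi>)
  case (QE s t)
  then show ?case
    using assms node_type_nth_cong[OF assms(2)] node_type_nth_cong[OF assms(3)]
    by (cases s; cases t) (auto simp: eq_commute)
next
  case (QEq s t)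
  then show ?case
    using assms node_type_nth_cong[OF assms(2)] node_type_nth_cong[OF assms(3)]
    by (cases s; cases t) (auto simp: eq_commute)
qed auto

lemma card_node_types: "card {t :: (bool \<times> bool \<times> bool) list. length t = k} = 8 ^ k"
proof -
  have "card (UNIV :: (bool \<times> bool \<times> bool) set) = 8"
    by (simp add: UNIV_Times_UNIV[symmetric] card_cartesian_product del: UNIV_Times_UNIV)
  then show ?thesis
    using card_lists_length_eq[of "UNIV :: (bool \<times> bool \<times> bool) set" k] by simp
qed

definition bridge_tail_types ::
  "'a set \<Rightarrow> ('a \<times> 'a) set \<Rightarrow> qf \<Rightarrow> 'a list \<Rightarrow> 'a list \<Rightarrow> (bool \<times> bool \<times> bool) list list" where
  "bridge_tail_types V E \<phi> as xs =
     map (node_type E as \<circ> fst) (filter (is_bridge V E \<phi> as) (walk_edges xs))"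

lemma num_bridges_le_if_distinct_bridge_tail_types:
  assumes "distinct (bridge_tail_types V E \<phi> as xs)"
  shows "num_bridges V E \<phi> as xs \<le> 8 ^ length as"
proof -
  let ?T = "bridge_tail_types V E \<phi> as xs"
  have "num_bridges V E \<phi> as xs = card (set ?T)"
    using assms distinct_card
    by (fastforce simp: num_bridges_eq_walk_edges bridge_tail_types_def)
  also have "\<dots> \<le> card {t :: (bool \<times> bool \<times> bool) list. length t = length as}"
    by (rule card_mono)
      (use finite_lists_length_eq[of "UNIV :: (bool \<times> bool \<times> bool) set" "length as"] in
        \<open>auto simp: bridge_tail_types_def node_type_def\<close>)
  finally show ?thesis by (simp add: card_node_types)
qed

lemma bridge_tail_types_decomp:
  assumes "t \<in> set (bridge_tail_types V E \<phi> as ys)"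
  obtains p b c q where "ys = p @ b # c # q" "is_bridge V E \<phi> as (b, c)" "node_type E as b = t"
  using assms walk_edges_decomp by (fastforce simp: bridge_tail_types_def)

locale acyclic_insertion =
  fixes V :: "'a set" and E :: "('a \<times> 'a) set" and \<phi> :: qf and as :: "'a list"
  assumes acyclic: "acyclic E" and edges_in_V: "E \<subseteq> V \<times> V"
    and params_bounded: "qparams \<phi> \<subseteq> {..<length as}"
begin

abbreviation "F \<equiv> changed_edges V E \<phi> as"
abbreviation "bridge \<equiv> is_bridge V E \<phi> as"
abbreviation "bridges \<equiv> num_bridges V E \<phi> as"
abbreviation "tail_types \<equiv> bridge_tail_types V E \<phi> as"

lemma edges_subset_changed: "E \<subseteq> F"
  using edges_in_V by (auto simp: changed_edges_def)

lemma bridge_shortcut: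
  assumes "bridge (b, c)" "node_type E as x = node_type E as b" "x \<in> V"
    and "x \<noteq> c" "(c, x) \<notin> E" "(c, b) \<notin> E" "b \<noteq> c"
  shows "(x, c) \<in> F"
proof (cases "(x, c) \<in> E")
  case True
  then show ?thesis using edges_subset_changed by auto
next
  case False
  have irrefl: "(z, z) \<notin> E" for z
    using acyclic by (auto simp: acyclic_def)
  have "c \<in> V" and "qsat E as b c \<phi>"
    using assms(1) by (auto simp: is_bridge_def changed_edges_def)
  moreover have "qsat E as x c \<phi> = qsat E as b c \<phi>"
    by (rule qsat_node_type_cong[OF params_bounded assms(2)])
      (use assms(1,4-7) False irrefl in \<open>auto simp: is_bridge_def\<close>)
  ultimately show ?thesis using \<open>x \<in> V\<close> by (auto simp: changed_edges_def)
qed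

end

locale acyclic_insertion_without_short_cycles = acyclic_insertion +
  assumes no_short_cycle: "\<not> (\<exists>xs. is_cycle F xs \<and> bridges xs \<le> Suc (8 ^ length as))"
begin

lemma bridge_not_loop_or_reversed:
  assumes "bridge (b, c)"
  shows "b \<noteq> c" "(c, b) \<notin> E"
proof -
  have bc: "(b, c) \<in> F" "(b, c) \<notin> E" using assms by (auto simp: is_bridge_def)
  show "b \<noteq> c"
  proof
    assume "b = c"
    then have "is_cycle F [b, b] \<and> bridges [b, b] \<le> Suc (8 ^ length as)"
      using bc by (auto simp: is_cycle_def is_walk_def num_bridges_def)
    then show False using no_short_cycle by blast
  qed
  show "(c, b) \<notin> E"
  proof
    assume "(c, b) \<in> E"
    then have "is_cycle F [b, c, b] \<and> bridges [b, c, b] \<le> Suc (8 ^ length as)"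
      using bc edges_subset_changed
      by (auto simp: is_cycle_def is_walk_def num_bridges_def is_bridge_def)
    then show False using no_short_cycle by blast
  qed
qed

lemma shortcut_to_later_bridge_head:
  assumes xF: "(x, hd ys) \<in> F" and ys: "is_walk F ys" "distinct (tail_types ys)"
    and ys_split: "ys = p @ b # c # q"
    and bc: "bridge (b, c)" and type_b: "node_type E as b = node_type E as x"
  shows "(x, c) \<in> F"
proof -
  have edges_ys: "walk_edges ys = walk_edges (p @ [b]) @ (b, c) # walk_edges (c # q)"
    using ys_split walk_edges_append[of p b "c # q"] by simp
  text \<open>A return from c to x that uses no bridge would close a cycle through the prefix
    p @ [b, c] of ys, which has at most 8 ^ length as bridges, and the edge (x, hd ys).\<close>
  have no_return: False if r: "is_walk F (c # r)" "last (c # r) = x" "bridges (c # r) = 0" for r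
  proof -
    let ?C = "x # p @ b # c # r"
    have edges_C: "walk_edges ?C = (x, hd ys) # walk_edges (p @ [b]) @ (b, c) # walk_edges (c # r)"
      using ys_split walk_edges_append[of p b "c # r"] by (simp add: walk_edges_Cons hd_append)
    have "is_cycle F ?C"
      using edges_C edges_ys xF ys r by (auto simp: is_cycle_def is_walk_iff_walk_edges)
    moreover have "bridges ?C \<le> Suc (bridges ys)"
      using edges_C edges_ys r by (simp add: num_bridges_eq_walk_edges)
    moreover have "bridges ys \<le> 8 ^ length as"
      using ys(2) by (rule num_bridges_le_if_distinct_bridge_tail_types)
    ultimately have "is_cycle F ?C \<and> bridges ?C \<le> Suc (8 ^ length as)" by simp
    then show False using no_short_cycle by blast
  qed
  have x_ne_c: "x \<noteq> c"
    using no_return[of "[]"] by (auto simp: is_walk_def num_bridges_def)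
  have c_x: "(c, x) \<notin> E"
    using no_return[of "[x]"] edges_subset_changed
    by (auto simp: is_walk_def num_bridges_def is_bridge_def)
  have "x \<in> V" using xF by (simp add: changed_edges_def)
  from bridge_shortcut[OF bc type_b[symmetric] this x_ne_c c_x] bridge_not_loop_or_reversed[OF bc]
  show ?thesis by blast
qed

lemma walk_Cons_distinct_tail_types:
  assumes xF: "(x, hd ys) \<in> F" and ys: "is_walk F ys" "distinct (tail_types ys)"
  shows "\<exists>zs. is_walk F zs \<and> hd zs = x \<and> last zs = last ys \<and> distinct (tail_types zs)"
proof (cases "bridge (x, hd ys) \<and> node_type E as x \<in> set (tail_types ys)")
  case False
  have "walk_edges (x # ys) = (x, hd ys) # walk_edges ys"
    using ys by (simp add: walk_edges_Cons is_walk_def)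
  then show ?thesis
    using False xF ys
    by (intro exI[of _ "x # ys"]) (auto simp: is_walk_iff_walk_edges bridge_tail_types_def)
next
  case True
  then obtain p b c q where ys_split: "ys = p @ b # c # q"
    and bc: "bridge (b, c)" and type_b: "node_type E as b = node_type E as x"
    using bridge_tail_types_decomp by metis
  have edges_ys: "walk_edges ys = walk_edges (p @ [b]) @ (b, c) # walk_edges (c # q)"
    using ys_split walk_edges_append[of p b "c # q"] by simp
  have "(x, c) \<in> F"
    using shortcut_to_later_bridge_head[OF xF ys ys_split bc type_b] .
  moreover have "distinct (tail_types (c # q))" "node_type E as x \<notin> set (tail_types (c # q))"
    using ys(2) edges_ys bc type_b by (auto simp: bridge_tail_types_def)
  ultimately show ?thesis
    using ys ys_split edges_ys
    by (intro exI[of _ "x # c # q"]) (auto simp: is_walk_iff_walk_edges bridge_tail_types_def)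
qed

lemma walk_with_distinct_tail_types:
  "is_walk F xs \<Longrightarrow> \<exists>ys. is_walk F ys \<and> hd ys = hd xs \<and> last ys = last xs \<and> distinct (tail_types ys)"
proof (induction xs)
  case (Cons x xs)
  show ?case
  proof (cases "xs = []")
    case True
    then show ?thesis using Cons.prems by (intro exI[of _ "[x]"]) (auto simp: bridge_tail_types_def)
  next
    case False
    then have "(x, hd xs) \<in> F" "is_walk F xs"
      using Cons.prems by (auto simp: is_walk_iff_walk_edges walk_edges_Cons)
    with Cons.IH obtain ys where "is_walk F ys" "hd ys = hd xs" "last ys = last xs" "distinct (tail_types ys)"
      by blast
    with walk_Cons_distinct_tail_types[of x ys] \<open>(x, hd xs) \<in> F\<close> False show ?thesis by auto
  qed
qed (simp add: is_walk_def)

lemma bridge_dist_le: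
  assumes "path_from_to F u v xs"
  shows "bridge_dist V E \<phi> as u v \<le> 8 ^ length as"
proof -
  obtain ys where "path_from_to F u v ys" "distinct (tail_types ys)"
    using walk_with_distinct_tail_types assms by (fastforce simp: path_from_to_def)
  then show ?thesis
    using bridge_dist_le_num_bridges num_bridges_le_if_distinct_bridge_tail_types
    by (meson order_trans)
qed

end

theorem lemma4p4:
  fixes \<phi> :: qf and k :: nat
  assumes "qparams \<phi> \<subseteq> {..<k}"
  shows "\<exists>m::nat. \<forall>(V :: nat set) E (as :: nat list).
           is_dag V E \<and> length as = k \<and> set as \<subseteq> V \<longrightarrow>
           (\<exists>xs. is_cycle (changed_edges V E \<phi> as) xs \<and> num_bridges V E \<phi> as xs \<le> m)
         \<or> (\<forall>u \<in> V. \<forall>v \<in> V. (\<exists>xs. path_from_to (changed_edges V E \<phi> as) u v xs)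
               \<longrightarrow> bridge_dist V E \<phi> as u v \<le> m)"
proof (intro exI[of _ "Suc (8 ^ k)"] allI impI, subst disj_commute, rule disjCI)
  fix V E and as :: "nat list"
  assume dag: "is_dag V E \<and> length as = k \<and> set as \<subseteq> V"
    and "\<not> (\<exists>xs. is_cycle (changed_edges V E \<phi> as) xs \<and> num_bridges V E \<phi> as xs \<le> Suc (8 ^ k))"
  then interpret acyclic_insertion_without_short_cycles V E \<phi> as
    using assms by unfold_locales (auto simp: is_dag_def)
  show "\<forall>u \<in> V. \<forall>v \<in> V. (\<exists>xs. path_from_to F u v xs) \<longrightarrow> bridge_dist V E \<phi> as u v \<le> Suc (8 ^ k)"
    using bridge_dist_le dag le_SucI by blast
qed

end
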